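(* Let $A$ be the random matrix defined in the context, and consider parameters $r\le k$ and $D$ with $r\to\infty$, $D/r^2\to\infty$ and $(\log k)/D\to0$. Then with probability $1-o(1)$ over $A$ there exist $x,x^-\in\mathcal{S}_k$, each with at most $r$ nonzero entries, all nonzero entries at least $1/r$, and $\mathrm{supp}(x)\neq\mathrm{supp}(x^-)$, such that for every $m=o(r^2)$ the total variation distance between the distribution of $m$ i.i.d. samples from $\mathrm{cat}(Ax)$ and that of $m$ i.i.d. samples from $\mathrm{cat}(Ax^-)$ is $o(1)$. In particular no algorithm given a document of $o(r^2)$ words can distinguish $\mathrm{cat}(Ax)$ from $\mathrm{cat}(Ax^-)$ with success probability better than $1/2+o(1)$.
   Context: Random instance: let $S_1,\dots,S_k\subseteq[D]$ be independent uniformly random subsets of $[D]$ (each element included independently with probability $1/2$), and let $A\in\mathbb{R}^{D\times k}$ have $A_{ij}=1/|S_j|$ if $i\in S_j$ and $A_{ij}=0$ otherwise. $\mathcal{S}_k=\{z\in\mathbb{R}^k_{\ge0}:\sum_iz_i=1\}$. $\mathrm{cat}(p)$ denotes the categorical distribution on $[D]$ with probability vector $p$. *)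

theory Defs
  imports "HOL-Probability.Probability"
begin

text \<open>Random instance: k independent uniformly random subsets of [D] = {0..<D}
  (uniform on the power set = each element independently with probability 1/2).
  Indices j outside {0..<k} are set to the empty set.\<close>
definition random_sets :: "nat \<Rightarrow> nat \<Rightarrow> (nat \<Rightarrow> nat set) pmf" where
  "random_sets D k = Pi_pmf {..<k} {} (\<lambda>_. pmf_of_set (Pow {..<D}))"

definition topic_matrix :: "(nat \<Rightarrow> nat set) \<Rightarrow> nat \<Rightarrow> nat \<Rightarrow> real" where
  "topic_matrix S i j = (if i \<in> S j then 1 / real (card (S j)) else 0)"

definition mat_vec :: "nat \<Rightarrow> (nat \<Rightarrow> nat \<Rightarrow> real) \<Rightarrow> (nat \<Rightarrow> real) \<Rightarrow> nat \<Rightarrow> real" where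
  "mat_vec k A x i = (\<Sum>j<k. A i j * x j)"

definition prob_simplex :: "nat \<Rightarrow> (nat \<Rightarrow> real) set" where
  "prob_simplex k = {z. (\<forall>j<k. 0 \<le> z j) \<and> (\<forall>j\<ge>k. z j = 0) \<and> (\<Sum>j<k. z j) = 1}"

definition supp_vec :: "(nat \<Rightarrow> real) \<Rightarrow> nat set" where
  "supp_vec z = {j. z j \<noteq> 0}"

definition tv_iid_cat :: "nat \<Rightarrow> nat \<Rightarrow> (nat \<Rightarrow> real) \<Rightarrow> (nat \<Rightarrow> real) \<Rightarrow> real" where
  "tv_iid_cat D m p q =
     (1/2) * (\<Sum>w \<in> {..<m} \<rightarrow>\<^sub>E {..<D}. \<bar>(\<Prod>i<m. p (w i)) - (\<Prod>i<m. q (w i))\<bar>)"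

end

theory Submission
  imports Defs
begin

text \<open>Use only the first \<open>r' = r div 4\<close> topics. The vector \<open>x\<close> weights each of them by its
  size, so that \<open>A x = N / T\<close>, where \<open>N i\<close> counts the topics containing word \<open>i\<close> and \<open>T\<close> is the
  total size; \<open>x\<^sup>-\<close> does the same after dropping the topic \<open>j0\<close> minimising
  \<open>R j = (\<Sum>i\<in>S j. 1 / N i)\<close>. A direct computation gives
  \<open>1 + \<chi>\<^sup>2 = T (T - 2 |S j0| + R j0) / (T - |S j0|)\<^sup>2\<close> for the chi-square divergence of \<open>A x\<^sup>-\<close> from
  \<open>A x\<close>, and as the \<open>R j\<close> add up to at most \<open>D\<close>, the least of them is at most \<open>D / r'\<close>. If every
  topic has at least \<open>D/4\<close> words, which by Chebyshev's inequality fails for a given topic with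
  probability at most \<open>4/D\<close>, this yields \<open>\<chi>\<^sup>2 \<le> 16 / r'\<^sup>2\<close>. Finally \<open>1 + \<chi>\<^sup>2\<close> is multiplicative
  under products and bounds the squared \<open>l1\<close> distance by Cauchy-Schwarz, so the laws of \<open>m\<close>
  samples are at total variation distance at most \<open>sqrt (exp (1024 m / r\<^sup>2) - 1) / 2\<close>.\<close>

lemma sum_PiE_prod_eq_power:
  fixes f :: "'a \<Rightarrow> 'b::comm_semiring_1"
  assumes "finite A"
  shows "(\<Sum>w\<in>{..<m} \<rightarrow>\<^sub>E A. \<Prod>i<m. f (w i)) = (\<Sum>x\<in>A. f x) ^ m"
  using prod_sum_PiE[of "{..<m}" "\<lambda>_. A" "\<lambda>_. f"] assms by simp

lemma l1_distance_square_le_chi_square: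
  fixes P Q :: "'a \<Rightarrow> real"
  assumes "finite W" and P_nonneg: "\<And>w. w \<in> W \<Longrightarrow> 0 \<le> P w"
    and "sum P W = 1" "sum Q W = 1"
    and abs_cont: "\<And>w. w \<in> W \<Longrightarrow> P w = 0 \<Longrightarrow> Q w = 0"
  shows "(\<Sum>w\<in>W. \<bar>P w - Q w\<bar>)\<^sup>2 \<le> (\<Sum>w\<in>W. Q w ^ 2 / P w) - 1"
proof -
  have split: "\<bar>P w - Q w\<bar> = \<bar>P w - Q w\<bar> / sqrt (P w) * sqrt (P w)" if "w \<in> W" for w
    using abs_cont[OF that] P_nonneg[OF that] by (cases "P w = 0") auto
  have expand: "(\<bar>P w - Q w\<bar> / sqrt (P w))\<^sup>2 = P w - 2 * Q w + Q w ^ 2 / P w" if "w \<in> W" for w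
    using abs_cont[OF that] P_nonneg[OF that]
    by (cases "P w = 0") (auto simp: power_divide field_simps power2_eq_square)
  have "(\<Sum>w\<in>W. \<bar>P w - Q w\<bar>)\<^sup>2 = (\<Sum>w\<in>W. \<bar>P w - Q w\<bar> / sqrt (P w) * sqrt (P w))\<^sup>2"
    using split by (metis (no_types, lifting) sum.cong)
  also have "\<dots> \<le> (\<Sum>w\<in>W. (\<bar>P w - Q w\<bar> / sqrt (P w))\<^sup>2) * (\<Sum>w\<in>W. (sqrt (P w))\<^sup>2)"
    by (rule Cauchy_Schwarz_ineq_sum)
  also have "\<dots> = (\<Sum>w\<in>W. Q w ^ 2 / P w) - 1"
    using assms by (simp add: expand P_nonneg sum.distrib sum_subtractf sum_distrib_left[symmetric])
  finally show ?thesis .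
qed

lemma tv_iid_cat_le_chi_square:
  assumes p_nonneg: "\<And>i. i < D \<Longrightarrow> 0 \<le> p i"
    and "(\<Sum>i<D. p i) = 1" "(\<Sum>i<D. q i) = 1"
    and abs_cont: "\<And>i. i < D \<Longrightarrow> p i = 0 \<Longrightarrow> q i = 0"
  shows "tv_iid_cat D m p q \<le> 1/2 * sqrt ((\<Sum>i<D. q i ^ 2 / p i) ^ m - 1)"
proof -
  define W where "W = {..<m} \<rightarrow>\<^sub>E {..<D}"
  define P where "P w = (\<Prod>i<m. p (w i))" for w
  define Q where "Q w = (\<Prod>i<m. q (w i))" for w
  have letters: "w \<in> W \<Longrightarrow> i < m \<Longrightarrow> w i < D" for w i by (auto simp: W_def)
  have "(\<Sum>w\<in>W. \<bar>P w - Q w\<bar>)\<^sup>2 \<le> (\<Sum>w\<in>W. Q w ^ 2 / P w) - 1"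
  proof (rule l1_distance_square_le_chi_square)
    show "w \<in> W \<Longrightarrow> 0 \<le> P w" for w
      unfolding P_def using p_nonneg letters by (auto intro!: prod_nonneg)
    show "w \<in> W \<Longrightarrow> P w = 0 \<Longrightarrow> Q w = 0" for w
      unfolding P_def Q_def using abs_cont letters by (auto simp: prod_zero_iff)
  qed (use assms in \<open>simp_all add: W_def P_def Q_def sum_PiE_prod_eq_power finite_PiE\<close>)
  also have "(\<Sum>w\<in>W. Q w ^ 2 / P w) = (\<Sum>i<D. q i ^ 2 / p i) ^ m"
    unfolding W_def P_def Q_def
    by (simp add: prod_dividef prod_power_distrib flip: sum_PiE_prod_eq_power)
  finally show ?thesis
    unfolding tv_iid_cat_def by (simp flip: W_def P_def Q_def add: real_le_rsqrt)
qed

definition coverage :: "nat set \<Rightarrow> (nat \<Rightarrow> nat set) \<Rightarrow> nat \<Rightarrow> real" where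
  "coverage J S i = (\<Sum>j\<in>J. if i \<in> S j then 1 else 0)"

definition total_size :: "nat set \<Rightarrow> (nat \<Rightarrow> nat set) \<Rightarrow> real" where
  "total_size J S = (\<Sum>j\<in>J. real (card (S j)))"

definition size_weights :: "nat set \<Rightarrow> (nat \<Rightarrow> nat set) \<Rightarrow> nat \<Rightarrow> real" where
  "size_weights J S j = (if j \<in> J then real (card (S j)) / total_size J S else 0)"

definition inverse_coverage_sum :: "nat set \<Rightarrow> (nat \<Rightarrow> nat set) \<Rightarrow> nat \<Rightarrow> real" where
  "inverse_coverage_sum J S j = (\<Sum>i\<in>S j. 1 / coverage J S i)"

definition drop_least_redundant :: "nat set \<Rightarrow> (nat \<Rightarrow> nat set) \<Rightarrow> nat set" where
  "drop_least_redundant J S = J - {arg_min_on (inverse_coverage_sum J S) J}"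

lemma coverage_nonneg: "0 \<le> coverage J S i"
  by (simp add: coverage_def sum_nonneg)

lemma sum_if_mem_subset:
  "finite V \<Longrightarrow> A \<subseteq> V \<Longrightarrow> (\<Sum>i\<in>V. if i \<in> A then f i else 0) = sum f A"
  by (simp add: sum.inter_restrict[symmetric] Int_absorb1 Int_absorb2)

lemma coverage_Diff_singleton:
  "finite J \<Longrightarrow> j0 \<in> J \<Longrightarrow>
    coverage (J - {j0}) S i = coverage J S i - (if i \<in> S j0 then 1 else 0)"
  unfolding coverage_def by (simp add: sum_diff1)

lemma total_size_Diff_singleton:
  "finite J \<Longrightarrow> j0 \<in> J \<Longrightarrow> total_size (J - {j0}) S = total_size J S - real (card (S j0))"
  by (simp add: total_size_def sum_diff1)

lemma indicator_le_coverage: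
  "finite J \<Longrightarrow> j \<in> J \<Longrightarrow> (if i \<in> S j then 1 else 0) \<le> coverage J S i"
  unfolding coverage_def by (rule member_le_sum) auto

lemma sum_coverage:
  assumes "finite J" "finite V" "\<And>j. j \<in> J \<Longrightarrow> S j \<subseteq> V"
  shows "(\<Sum>i\<in>V. coverage J S i) = total_size J S"
proof -
  have "(\<Sum>i\<in>V. coverage J S i) = (\<Sum>j\<in>J. \<Sum>i\<in>V. if i \<in> S j then 1 else 0)"
    unfolding coverage_def by (rule sum.swap)
  also have "\<dots> = total_size J S"
    unfolding total_size_def by (rule sum.cong) (simp_all add: sum_if_mem_subset assms)
  finally show ?thesis .
qed

lemma sum_inverse_coverage_sum_le:
  assumes "finite J" "finite V" "\<And>j. j \<in> J \<Longrightarrow> S j \<subseteq> V"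
  shows "(\<Sum>j\<in>J. inverse_coverage_sum J S j) \<le> real (card V)"
proof -
  have "(\<Sum>j\<in>J. inverse_coverage_sum J S j)
      = (\<Sum>j\<in>J. \<Sum>i\<in>V. if i \<in> S j then 1 / coverage J S i else 0)"
    unfolding inverse_coverage_sum_def by (rule sum.cong) (simp_all add: sum_if_mem_subset assms)
  also have "\<dots> = (\<Sum>i\<in>V. \<Sum>j\<in>J. (if i \<in> S j then 1 else 0) * (1 / coverage J S i))"
    by (subst sum.swap) (auto intro!: sum.cong)
  also have "\<dots> = (\<Sum>i\<in>V. coverage J S i * (1 / coverage J S i))"
    by (simp only: coverage_def sum_distrib_right)
  also have "\<dots> \<le> (\<Sum>i\<in>V. 1)"
    by (rule sum_mono) simp
  finally show ?thesis by simp
qed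

lemma chi_square_drop_topic:
  fixes J V :: "nat set" and S :: "nat \<Rightarrow> nat set" and j0 :: nat
  defines "T \<equiv> total_size J S" and "T' \<equiv> total_size (J - {j0}) S"
  assumes "finite J" "finite V" "\<And>j. j \<in> J \<Longrightarrow> S j \<subseteq> V" "j0 \<in> J" "0 < T'"
  shows "(\<Sum>i\<in>V. (coverage (J - {j0}) S i / T')\<^sup>2 / (coverage J S i / T))
       = T / T'\<^sup>2 * (T - 2 * real (card (S j0)) + inverse_coverage_sum J S j0)"
proof -
  define e where "e i = (if i \<in> S j0 then 1 else 0 :: real)" for i
  define f where "f i = (if i \<in> S j0 then 1 / coverage J S i else 0)" for i
  have "T' = T - real (card (S j0))"
    unfolding T_def T'_def using assms by (simp add: total_size_Diff_singleton)
  then have pointwise: "(coverage (J - {j0}) S i / T')\<^sup>2 / (coverage J S i / T)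
      = T / T'\<^sup>2 * (coverage J S i - 2 * e i + f i)" for i
  proof (cases "coverage J S i = 0")
    case True
    then have "e i = 0"
      using indicator_le_coverage[OF assms(3,6), of i S] unfolding e_def by auto
    with True show ?thesis
      using assms by (simp add: coverage_Diff_singleton e_def f_def split: if_splits)
  next
    case False
    then show ?thesis
      using assms by (auto simp: coverage_Diff_singleton e_def f_def power2_eq_square field_simps)
  qed
  have "(\<Sum>i\<in>V. e i) = real (card (S j0))" and "(\<Sum>i\<in>V. f i) = inverse_coverage_sum J S j0"
    unfolding e_def f_def inverse_coverage_sum_def
    by (subst sum_if_mem_subset; use assms in simp)+
  moreover have "(\<Sum>i\<in>V. coverage J S i) = T"
    unfolding T_def by (rule sum_coverage) (use assms in auto)
  ultimately show ?thesis
    unfolding pointwise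
    by (simp only: sum.distrib sum_subtractf flip: sum_distrib_left)
qed

lemma mat_vec_size_weights:
  assumes "J \<subseteq> {..<k}" "\<And>j. j \<in> J \<Longrightarrow> 0 < card (S j)"
  shows "mat_vec k (topic_matrix S) (size_weights J S) i = coverage J S i / total_size J S"
proof -
  have "mat_vec k (topic_matrix S) (size_weights J S) i
      = (\<Sum>j<k. if j \<in> J then (if i \<in> S j then 1 else 0) / total_size J S else 0)"
    unfolding mat_vec_def
  proof (rule sum.cong)
    show "topic_matrix S i j * size_weights J S j
        = (if j \<in> J then (if i \<in> S j then 1 else 0) / total_size J S else 0)" for j
      using assms(2)[of j] by (auto simp: topic_matrix_def size_weights_def)
  qed simp
  also have "\<dots> = coverage J S i / total_size J S"
    using assms(1) by (simp add: sum_if_mem_subset coverage_def sum_divide_distrib)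
  finally show ?thesis .
qed

lemma size_weights_in_prob_simplex:
  assumes "J \<subseteq> {..<k}" "0 < total_size J S"
  shows "size_weights J S \<in> prob_simplex k"
proof -
  have "(\<Sum>j<k. size_weights J S j) = (\<Sum>j\<in>J. real (card (S j)) / total_size J S)"
    unfolding size_weights_def using assms(1) by (simp add: sum_if_mem_subset)
  also have "\<dots> = 1"
    using assms(2) by (simp add: total_size_def flip: sum_divide_distrib)
  finally show ?thesis
    using assms unfolding prob_simplex_def by (auto simp: size_weights_def)
qed

lemma supp_size_weights:
  assumes "0 < total_size J S" "\<And>j. j \<in> J \<Longrightarrow> 0 < card (S j)"
  shows "supp_vec (size_weights J S) = J"
  using assms by (auto simp: supp_vec_def size_weights_def)

lemma inverse_le_size_weights:
  assumes "j \<in> J" "0 < total_size J S" "total_size J S \<le> r * real (card (S j))"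
  shows "1 / r \<le> size_weights J S j"
proof -
  have "0 < r * real (card (S j))"
    using assms(2,3) by linarith
  then have "0 < r" "0 < real (card (S j))"
    by (simp_all add: zero_less_mult_iff)
  with assms show ?thesis
    by (auto simp: size_weights_def field_simps)
qed

locale large_topic_family =
  fixes V J :: "nat set" and S :: "nat \<Rightarrow> nat set"
  assumes eight_le_card_topics: "8 \<le> card J"
    and card_vocabulary_pos: "0 < card V"
    and topic_subset: "j \<in> J \<Longrightarrow> S j \<subseteq> V"
    and topic_large: "j \<in> J \<Longrightarrow> real (card V) \<le> 4 * real (card (S j))"
begin

abbreviation least_redundant :: nat where
  "least_redundant \<equiv> arg_min_on (inverse_coverage_sum J S) J"

abbreviation dropped :: "nat set" where
  "dropped \<equiv> drop_least_redundant J S"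

lemma finite_topics: "finite J" and topics_nonempty: "J \<noteq> {}"
  using eight_le_card_topics by (auto intro: card_ge_0_finite)

lemma finite_vocabulary: "finite V"
  using card_vocabulary_pos card_ge_0_finite by blast

lemma card_topic_pos: "j \<in> J \<Longrightarrow> 0 < card (S j)"
  using topic_large[of j] card_vocabulary_pos by (cases "card (S j)") auto

lemma card_topic_le: "j \<in> J \<Longrightarrow> card (S j) \<le> card V"
  using topic_subset finite_vocabulary by (simp add: card_mono)

lemma least_redundant_mem: "least_redundant \<in> J"
  using arg_min_if_finite(1)[OF finite_topics topics_nonempty] .

lemma dropped_subset: "dropped \<subseteq> J"
  by (auto simp: drop_least_redundant_def)

lemma total_size_ge: "real (card J) * real (card V) / 4 \<le> total_size J S"
proof -
  have "(\<Sum>j\<in>J. real (card V) / 4) \<le> total_size J S"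
    unfolding total_size_def by (rule sum_mono) (use topic_large in force)
  then show ?thesis by simp
qed

lemma total_size_le: "total_size J S \<le> real (card J) * real (card V)"
proof -
  have "total_size J S \<le> (\<Sum>j\<in>J. real (card V))"
    unfolding total_size_def by (rule sum_mono) (use card_topic_le in auto)
  then show ?thesis by simp
qed

lemma total_size_pos: "0 < total_size J S"
proof -
  have "0 < real (card J) * real (card V) / 4"
    using eight_le_card_topics card_vocabulary_pos by simp
  with total_size_ge show ?thesis
    by linarith
qed

lemma total_size_dropped_ge: "total_size J S / 2 \<le> total_size dropped S"
proof -
  have "real (card (S least_redundant)) \<le> real (card V)"
    using card_topic_le least_redundant_mem by simp
  also have "\<dots> \<le> real (card J) * real (card V) / 8"
    using mult_right_mono[of 8 "real (card J)" "real (card V)"] eight_le_card_topics by simp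
  also have "\<dots> \<le> total_size J S / 2"
    using total_size_ge by simp
  finally show ?thesis
    using least_redundant_mem finite_topics
    by (simp add: drop_least_redundant_def total_size_Diff_singleton)
qed

lemma total_size_dropped_pos: "0 < total_size dropped S"
  using total_size_dropped_ge total_size_pos by linarith

lemma inverse_coverage_sum_least_redundant_le:
  "real (card J) * inverse_coverage_sum J S least_redundant \<le> real (card V)"
proof -
  have "(\<Sum>j\<in>J. inverse_coverage_sum J S least_redundant) \<le> (\<Sum>j\<in>J. inverse_coverage_sum J S j)"
    by (rule sum_mono) (rule arg_min_least[OF finite_topics topics_nonempty])
  also have "\<dots> \<le> real (card V)"
    by (rule sum_inverse_coverage_sum_le[OF finite_topics finite_vocabulary topic_subset])
  finally show ?thesis by simp
qed

lemma chi_square_dropped_le: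
  "(\<Sum>i\<in>V. (coverage dropped S i / total_size dropped S)\<^sup>2 / (coverage J S i / total_size J S))
     \<le> 1 + 16 / real (card J) ^ 2"
proof -
  let ?T = "total_size J S" and ?T' = "total_size dropped S" and ?r = "real (card J)"
    and ?s = "real (card (S least_redundant))" and ?R = "inverse_coverage_sum J S least_redundant"
  have r_pos: "0 < ?r"
    using eight_le_card_topics by simp
  have "?T * ?R \<le> ?T * (real (card V) / ?r)"
    using inverse_coverage_sum_least_redundant_le total_size_pos r_pos
    by (intro mult_left_mono) (simp_all add: field_simps)
  also have "\<dots> \<le> ?T * (4 * ?T / ?r\<^sup>2)"
    using total_size_ge total_size_pos r_pos
    by (intro mult_left_mono) (simp_all add: field_simps power2_eq_square)
  also have "\<dots> = (2 * ?T)\<^sup>2 / ?r\<^sup>2"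
    by (simp add: power2_eq_square)
  also have "\<dots> \<le> (4 * ?T')\<^sup>2 / ?r\<^sup>2"
    using total_size_dropped_ge total_size_pos
    by (intro divide_right_mono power_mono) simp_all
  finally have TR: "?T * ?R \<le> 16 * ?T'\<^sup>2 / ?r\<^sup>2"
    by (simp add: power_mult_distrib)
  have T': "?T' = ?T - ?s"
    using finite_topics least_redundant_mem
    by (simp add: drop_least_redundant_def total_size_Diff_singleton)
  have "?T * (?T - 2 * ?s + ?R) = ?T'\<^sup>2 - ?s\<^sup>2 + ?T * ?R"
    unfolding T' by (simp add: power2_eq_square algebra_simps)
  also have "\<dots> \<le> (1 + 16 / ?r\<^sup>2) * ?T'\<^sup>2"
    using TR by (simp add: algebra_simps add_increasing)
  finally have "?T / ?T'\<^sup>2 * (?T - 2 * ?s + ?R) \<le> 1 + 16 / ?r\<^sup>2"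
    using total_size_dropped_pos by (simp add: field_simps)
  then show ?thesis
    using chi_square_drop_topic[of J V S least_redundant] finite_topics finite_vocabulary
      topic_subset least_redundant_mem total_size_dropped_pos
    by (simp add: drop_least_redundant_def)
qed

lemma inverse_le_size_weights_subfamily:
  assumes "K \<subseteq> J" "j \<in> K" "0 < total_size K S"
  shows "1 / (4 * real (card J)) \<le> size_weights K S j"
proof (rule inverse_le_size_weights[OF assms(2,3)])
  have "total_size K S \<le> total_size J S"
    unfolding total_size_def by (rule sum_mono2[OF finite_topics assms(1)]) simp
  also have "\<dots> \<le> real (card J) * real (card V)"
    by (rule total_size_le)
  also have "\<dots> \<le> real (card J) * (4 * real (card (S j)))"
    using topic_large assms(1,2) by (intro mult_left_mono) auto
  finally show "total_size K S \<le> 4 * real (card J) * real (card (S j))"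
    by simp
qed

lemma supp_size_weights_subfamily:
  "K \<subseteq> J \<Longrightarrow> 0 < total_size K S \<Longrightarrow> supp_vec (size_weights K S) = K"
  using card_topic_pos by (intro supp_size_weights) auto

lemma coverage_dropped_le: "coverage dropped S i \<le> coverage J S i"
  unfolding coverage_def using dropped_subset finite_topics by (intro sum_mono2) auto

lemma sum_coverage_div_total_size:
  assumes "K \<subseteq> J" "0 < total_size K S"
  shows "(\<Sum>i\<in>V. coverage K S i / total_size K S) = 1"
proof -
  have "(\<Sum>i\<in>V. coverage K S i) = total_size K S"
    using assms(1) finite_subset[OF assms(1) finite_topics] finite_vocabulary topic_subset
    by (intro sum_coverage) auto
  with assms(2) show ?thesis
    by (simp flip: sum_divide_distrib)
qed

end

text \<open>With at least \<open>D/4\<close> words in each of the first \<open>r/4\<close> topics, every size-proportional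
  weight is at least \<open>1/r\<close>; \<open>r \<ge> 32\<close> leaves at least eight topics.\<close>
definition good_instances :: "nat \<Rightarrow> nat \<Rightarrow> (nat \<Rightarrow> nat set) set" where
  "good_instances D r = {S. 32 \<le> r \<and> 0 < D \<and>
     (\<forall>j<r div 4. S j \<subseteq> {..<D} \<and> real D \<le> 4 * real (card (S j)))}"

lemma large_topic_family_good_instance:
  "S \<in> good_instances D r \<Longrightarrow> large_topic_family {..<D} {..<r div 4} S"
  by unfold_locales (auto simp: good_instances_def)

lemma hard_pair_admissible:
  fixes r k D :: nat and S :: "nat \<Rightarrow> nat set"
  defines "J \<equiv> {..<r div 4}"
  defines "x \<equiv> size_weights J S" and "x' \<equiv> size_weights (drop_least_redundant J S) S"
  assumes "S \<in> good_instances D r" "r \<le> k"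
  shows "x \<in> prob_simplex k \<and> x' \<in> prob_simplex k \<and>
    card (supp_vec x) \<le> r \<and> card (supp_vec x') \<le> r \<and>
    (\<forall>j \<in> supp_vec x. 1 / real r \<le> x j) \<and> (\<forall>j \<in> supp_vec x'. 1 / real r \<le> x' j) \<and>
    supp_vec x \<noteq> supp_vec x'"
proof -
  interpret large_topic_family "{..<D}" J S
    unfolding J_def using assms(4) by (rule large_topic_family_good_instance)
  have J_k: "J \<subseteq> {..<k}"
    using assms(5) by (auto simp: J_def)
  have supp: "supp_vec x = J" "supp_vec x' = dropped"
    unfolding x_def x'_def using total_size_pos total_size_dropped_pos dropped_subset
    by (simp_all add: supp_size_weights_subfamily)
  have "card dropped \<le> card J" "card J \<le> r"
    using card_mono[OF finite_topics dropped_subset] by (simp_all add: J_def)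
  moreover have "1 / real r \<le> 1 / (4 * real (card J))"
    using assms(4) by (auto simp: J_def good_instances_def intro!: divide_left_mono)
  ultimately show ?thesis
  proof (intro conjI ballI)
    show "x \<in> prob_simplex k" "x' \<in> prob_simplex k"
      unfolding x_def x'_def using J_k dropped_subset total_size_pos total_size_dropped_pos
      by (auto intro: size_weights_in_prob_simplex)
    show "1 / real r \<le> x j" if "j \<in> supp_vec x" for j
      using order_trans[OF \<open>1 / real r \<le> _\<close> inverse_le_size_weights_subfamily]
        that[unfolded supp] total_size_pos
      unfolding x_def by blast
    show "1 / real r \<le> x' j" if "j \<in> supp_vec x'" for j
      using order_trans[OF \<open>1 / real r \<le> _\<close> inverse_le_size_weights_subfamily]
        that[unfolded supp] dropped_subset total_size_dropped_pos
      unfolding x'_def by blast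
    show "supp_vec x \<noteq> supp_vec x'"
      using least_redundant_mem unfolding supp by (auto simp: drop_least_redundant_def)
  qed (simp_all add: supp)
qed

lemma power_one_plus_le_exp: "0 \<le> c \<Longrightarrow> (1 + c) ^ m \<le> exp (real m * c)"
  using power_mono[OF exp_ge_add_one_self[of c], of m] by (simp add: exp_of_nat_mult add.commute)

lemma hard_pair_tv_le:
  fixes r k D m :: nat and S :: "nat \<Rightarrow> nat set"
  defines "J \<equiv> {..<r div 4}"
  defines "x \<equiv> size_weights J S" and "x' \<equiv> size_weights (drop_least_redundant J S) S"
  assumes "S \<in> good_instances D r" "r \<le> k"
  shows "tv_iid_cat D m (mat_vec k (topic_matrix S) x) (mat_vec k (topic_matrix S) x')
    \<le> 1/2 * sqrt (exp (1024 * (real m / real r ^ 2)) - 1)"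
proof -
  interpret large_topic_family "{..<D}" J S
    unfolding J_def using assms(4) by (rule large_topic_family_good_instance)
  define p where "p i = coverage J S i / total_size J S" for i
  define q where "q i = coverage dropped S i / total_size dropped S" for i
  have "J \<subseteq> {..<k}"
    using assms(5) by (auto simp: J_def)
  then have Ax: "mat_vec k (topic_matrix S) x = p" and Ax': "mat_vec k (topic_matrix S) x' = q"
    unfolding x_def x'_def p_def q_def using dropped_subset card_topic_pos
    by (auto intro!: mat_vec_size_weights)
  have "32 \<le> r"
    using assms(4) by (simp add: good_instances_def)
  then have "r \<le> 8 * (r div 4)"
    by presburger
  then have "real r ^ 2 \<le> (8 * real (card J)) ^ 2"
    unfolding J_def by (intro power_mono) simp_all
  then have "16 / real (card J) ^ 2 \<le> 1024 / real r ^ 2"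
    using \<open>32 \<le> r\<close> eight_le_card_topics by (simp add: field_simps)
  then have chi: "(\<Sum>i<D. q i ^ 2 / p i) \<le> 1 + 1024 / real r ^ 2"
    using chi_square_dropped_le unfolding p_def q_def by simp
  have p_nonneg: "0 \<le> p i" for i
    unfolding p_def using coverage_nonneg total_size_pos by simp
  have "tv_iid_cat D m p q \<le> 1/2 * sqrt ((\<Sum>i<D. q i ^ 2 / p i) ^ m - 1)"
  proof (rule tv_iid_cat_le_chi_square)
    show "(\<Sum>i<D. p i) = 1" "(\<Sum>i<D. q i) = 1"
      unfolding p_def q_def using dropped_subset total_size_pos total_size_dropped_pos
      by (simp_all add: sum_coverage_div_total_size)
    show "p i = 0 \<Longrightarrow> q i = 0" for i
      unfolding p_def q_def using coverage_dropped_le[of i] coverage_nonneg[of dropped S i]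
        total_size_pos by simp
  qed (rule p_nonneg)
  also have "\<dots> \<le> 1/2 * sqrt (exp (1024 * (real m / real r ^ 2)) - 1)"
    using power_mono[OF chi, of m] power_one_plus_le_exp[of "1024 / real r ^ 2" m]
    by (simp add: p_nonneg sum_nonneg mult.commute)
  finally show ?thesis
    unfolding Ax Ax' .
qed

lemma sum_Pow_card_deviation_square:
  "(\<Sum>A\<in>Pow {..<D}. (2 * real (card A) - real D)\<^sup>2) = real D * 2 ^ D"
proof (induction D)
  case (Suc D)
  let ?dev = "\<lambda>A. 2 * real (card A) - real D"
  have inj: "inj_on (insert D) (Pow {..<D})"
    by (rule inj_onI) (metis Diff_insert_absorb PowD lessThan_iff less_irrefl subsetD)
  have "Pow {..<Suc D} = Pow {..<D} \<union> insert D ` Pow {..<D}"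
    and "Pow {..<D} \<inter> insert D ` Pow {..<D} = {}"
    by (auto simp: lessThan_Suc Pow_insert)
  then have "(\<Sum>A\<in>Pow {..<Suc D}. (2 * real (card A) - real (Suc D))\<^sup>2)
      = (\<Sum>A\<in>Pow {..<D}. (?dev A - 1)\<^sup>2) + (\<Sum>A\<in>insert D ` Pow {..<D}. (2 * real (card A) - real (Suc D))\<^sup>2)"
    by (simp add: sum.union_disjoint algebra_simps)
  also have "(\<Sum>A\<in>insert D ` Pow {..<D}. (2 * real (card A) - real (Suc D))\<^sup>2)
      = (\<Sum>A\<in>Pow {..<D}. (?dev A + 1)\<^sup>2)"
    by (auto simp: sum.reindex[OF inj] card_insert_if finite_subset algebra_simps intro!: sum.cong)
  also have "(\<Sum>A\<in>Pow {..<D}. (?dev A - 1)\<^sup>2) + \<dots> = (\<Sum>A\<in>Pow {..<D}. 2 * (?dev A)\<^sup>2 + 2)"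
    by (simp add: power2_eq_square algebra_simps flip: sum.distrib)
  also have "\<dots> = real (Suc D) * 2 ^ Suc D"
    using Suc by (simp add: sum.distrib card_Pow algebra_simps flip: sum_distrib_left)
  finally show ?case .
qed simp

lemma prob_uniform_subset_not_large:
  assumes "0 < D"
  shows "measure_pmf.prob (pmf_of_set (Pow {..<D}))
      {A. \<not> (A \<subseteq> {..<D} \<and> real D \<le> 4 * real (card A))} \<le> 4 / real D"
proof -
  define B where "B = {A \<in> Pow {..<D}. 4 * real (card A) < real D}"
  have prob_B: "measure_pmf.prob (pmf_of_set (Pow {..<D}))
      {A. \<not> (A \<subseteq> {..<D} \<and> real D \<le> 4 * real (card A))} = real (card B) / 2 ^ D"
    by (subst measure_pmf_of_set) (auto simp: B_def card_Pow Int_def not_le intro!: arg_cong[where f=card])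
  have "real (card B) * (real D / 2)\<^sup>2 = (\<Sum>A\<in>B. (real D / 2)\<^sup>2)"
    by simp
  also have "\<dots> \<le> (\<Sum>A\<in>B. (2 * real (card A) - real D)\<^sup>2)"
  proof (rule sum_mono)
    fix A assume "A \<in> B"
    then have "real D / 2 \<le> real D - 2 * real (card A)"
      by (simp add: B_def)
    then have "(real D / 2)\<^sup>2 \<le> (real D - 2 * real (card A))\<^sup>2"
      by (intro power_mono) simp_all
    then show "(real D / 2)\<^sup>2 \<le> (2 * real (card A) - real D)\<^sup>2"
      by (simp only: power2_commute)
  qed
  also have "\<dots> \<le> (\<Sum>A\<in>Pow {..<D}. (2 * real (card A) - real D)\<^sup>2)"
    by (rule sum_mono2) (auto simp: B_def)
  also have "\<dots> = real D * 2 ^ D"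
    by (rule sum_Pow_card_deviation_square)
  finally have "real (card B) * real D \<le> 4 * 2 ^ D"
    using assms by (simp add: power2_eq_square field_simps)
  then show ?thesis
    unfolding prob_B using assms by (simp add: field_simps)
qed

lemma prob_good_instances_ge:
  assumes "32 \<le> r" "0 < D" "r \<le> k"
  shows "1 - real r / real D \<le> measure_pmf.prob (random_sets D k) (good_instances D r)"
proof -
  let ?M = "random_sets D k"
  define bad where "bad j = {S. \<not> (S j \<subseteq> {..<D} \<and> real D \<le> 4 * real (card (S j)))}" for j :: nat
  have "measure_pmf.prob ?M (bad j) \<le> 4 / real D" if "j < r div 4" for j
  proof -
    have "measure_pmf.prob ?M (bad j) = measure_pmf.prob (map_pmf (\<lambda>S. S j) ?M)
        {A. \<not> (A \<subseteq> {..<D} \<and> real D \<le> 4 * real (card A))}"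
      by (simp add: bad_def vimage_def)
    also have "map_pmf (\<lambda>S. S j) ?M = pmf_of_set (Pow {..<D})"
      unfolding random_sets_def using that assms(3) by (subst Pi_pmf_component) auto
    finally show ?thesis
      using prob_uniform_subset_not_large[OF assms(2)] by simp
  qed
  then have "measure_pmf.prob ?M (\<Union>j<r div 4. bad j) \<le> (\<Sum>j<r div 4. 4 / real D)"
    by (intro order_trans[OF measure_pmf.finite_measure_subadditive_finite] sum_mono) auto
  also have "\<dots> \<le> real r / real D"
    using assms(2) by (simp add: field_simps)
  finally have "measure_pmf.prob ?M (\<Union>j<r div 4. bad j) \<le> real r / real D" .
  moreover have "good_instances D r = UNIV - (\<Union>j<r div 4. bad j)"
    using assms(1,2) by (auto simp: good_instances_def bad_def)
  ultimately show ?thesis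
    using measure_pmf.prob_compl[of "\<Union>j<r div 4. bad j" ?M] by simp
qed

lemma ratio_tendsto_zero_of_square_ratio_at_top:
  fixes r D :: "nat \<Rightarrow> nat"
  assumes "filterlim (\<lambda>n. real (D n) / real (r n) ^ 2) at_top sequentially"
  shows "(\<lambda>n. real (r n) / real (D n)) \<longlonglongrightarrow> 0"
proof (rule Lim_null_comparison)
  show "(\<lambda>n. inverse (real (D n) / real (r n) ^ 2)) \<longlonglongrightarrow> 0"
    using assms by (rule tendsto_inverse_0_at_top)
  have "real (r n) / real (D n) \<le> real (r n) ^ 2 / real (D n)" for n
    using le_square[of "r n"] by (intro divide_right_mono) (simp_all add: power2_eq_square flip: of_nat_mult)
  then show "\<forall>\<^sub>F n in sequentially. norm (real (r n) / real (D n)) \<le> inverse (real (D n) / real (r n) ^ 2)"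
    by simp
qed

lemma prob_good_instances_tendsto_one:
  fixes r k D :: "nat \<Rightarrow> nat"
  assumes "\<And>n. r n \<le> k n" "filterlim r at_top sequentially"
    and "filterlim (\<lambda>n. real (D n) / real (r n) ^ 2) at_top sequentially"
  shows "(\<lambda>n. measure_pmf.prob (random_sets (D n) (k n)) (good_instances (D n) (r n))) \<longlonglongrightarrow> 1"
proof (rule tendsto_sandwich[of "\<lambda>n. 1 - real (r n) / real (D n)" _ _ "\<lambda>n. 1"])
  have "\<forall>\<^sub>F n in sequentially. 32 \<le> r n"
    using assms(2) by (simp add: filterlim_at_top)
  moreover have "\<forall>\<^sub>F n in sequentially. 1 \<le> real (D n) / real (r n) ^ 2"
    using assms(3) by (simp add: filterlim_at_top)
  ultimately show "\<forall>\<^sub>F n in sequentially.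
      1 - real (r n) / real (D n) \<le> measure_pmf.prob (random_sets (D n) (k n)) (good_instances (D n) (r n))"
  proof eventually_elim
    case (elim n)
    then have "0 < D n"
      by (metis div_0 not_one_le_zero of_nat_0 gr0I)
    with elim show ?case
      by (intro prob_good_instances_ge assms(1))
  qed
  show "(\<lambda>n. 1 - real (r n) / real (D n)) \<longlonglongrightarrow> 1"
    using tendsto_diff[OF tendsto_const ratio_tendsto_zero_of_square_ratio_at_top[OF assms(3)], of 1]
    by simp
qed auto

theorem lemma6p3:
  fixes r k D :: "nat \<Rightarrow> nat"
  assumes "\<And>n. r n \<le> k n"
    and "filterlim r at_top sequentially"
    and "filterlim (\<lambda>n. real (D n) / real (r n) ^ 2) at_top sequentially"
    and "(\<lambda>n. ln (real (k n)) / real (D n)) \<longlonglongrightarrow> 0"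
  shows "\<exists>(G :: nat \<Rightarrow> (nat \<Rightarrow> nat set) set) (X :: nat \<Rightarrow> (nat \<Rightarrow> nat set) \<Rightarrow> nat \<Rightarrow> real)
            (Xm :: nat \<Rightarrow> (nat \<Rightarrow> nat set) \<Rightarrow> nat \<Rightarrow> real).
     (\<lambda>n. measure_pmf.prob (random_sets (D n) (k n)) (G n)) \<longlonglongrightarrow> 1 \<and>
     (\<forall>n. \<forall>S \<in> G n.
        X n S \<in> prob_simplex (k n) \<and> Xm n S \<in> prob_simplex (k n) \<and>
        card (supp_vec (X n S)) \<le> r n \<and> card (supp_vec (Xm n S)) \<le> r n \<and>
        (\<forall>j \<in> supp_vec (X n S). X n S j \<ge> 1 / real (r n)) \<and>
        (\<forall>j \<in> supp_vec (Xm n S). Xm n S j \<ge> 1 / real (r n)) \<and>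
        supp_vec (X n S) \<noteq> supp_vec (Xm n S)) \<and>
     (\<forall>m :: nat \<Rightarrow> nat. (\<lambda>n. real (m n) / real (r n) ^ 2) \<longlonglongrightarrow> 0 \<longrightarrow>
        (\<exists>\<epsilon> :: nat \<Rightarrow> real. \<epsilon> \<longlonglongrightarrow> 0 \<and>
           (\<forall>n. \<forall>S \<in> G n.
              tv_iid_cat (D n) (m n)
                (mat_vec (k n) (topic_matrix S) (X n S))
                (mat_vec (k n) (topic_matrix S) (Xm n S)) \<le> \<epsilon> n)))"
proof -
  have tv_limit: "(\<lambda>n. 1/2 * sqrt (exp (1024 * (real (m n) / real (r n) ^ 2)) - 1)) \<longlonglongrightarrow> 0"
    if "(\<lambda>n. real (m n) / real (r n) ^ 2) \<longlonglongrightarrow> 0" for m :: "nat \<Rightarrow> nat"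
  proof -
    have "(\<lambda>n. 1/2 * sqrt (exp (1024 * (real (m n) / real (r n) ^ 2)) - 1))
        \<longlonglongrightarrow> 1/2 * sqrt (exp (1024 * 0) - 1)"
      by (intro tendsto_intros that)
    then show ?thesis
      by simp
  qed
  show ?thesis
    using prob_good_instances_tendsto_one[OF assms(1-3)]
      hard_pair_admissible[OF _ assms(1)] hard_pair_tv_le[OF _ assms(1)] tv_limit
    by (intro exI[of _ "\<lambda>n. good_instances (D n) (r n)"]
        exI[of _ "\<lambda>n. size_weights {..<r n div 4}"]
        exI[of _ "\<lambda>n S. size_weights (drop_least_redundant {..<r n div 4} S) S"]) blast
qed

end
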